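(* Let $R$ be a reflexive relation on $U$ such that $\mathrm{DM(RS)}$ is completely distributive. Let $x,y\in U\setminus\mathcal S$ be such that $\{x\}^{\blacktriangle}$ and $\{y\}^{\blacktriangle}$ are completely join-irreducible in $\wp(U)^{\blacktriangle}$. The following are equivalent: (i) there exists $u\in U$ with $\{x\}^{\blacktriangle},\{y\}^{\blacktriangle}\subseteq\{u\}^{\blacktriangle}$; (ii) each of $(\emptyset,\{x\}^{\blacktriangle})$ and $(\emptyset,\{y\}^{\blacktriangle})$ is below both $g(\emptyset,\{x\}^{\blacktriangle})$ and $g(\emptyset,\{y\}^{\blacktriangle})$ in $\mathrm{DM(RS)}$.
   Context: Let $U$ be a set and $R\subseteq U\times U$ a binary relation. For $x\in U$, $R(x)=\{y\in U\mid (x,y)\in R\}$ and $\breve R(x)=\{y\in U\mid (y,x)\in R\}$. For $X\subseteq U$: $X^{\blacktriangledown}=\{x\in U\mid R(x)\subseteq X\}$, $X^{\blacktriangle}=\{x\in U\mid R(x)\cap X\neq\emptyset\}$, $X^{\triangledown}=\{x\in U\mid \breve R(x)\subseteq X\}$, $X^{\vartriangle}=\{x\in U\mid \breve R(x)\cap X\neq\emptyset\}$; composites like $X^{\vartriangle\blacktriangledown}$ mean $(X^{\vartriangle})^{\blacktriangledown}$. $\wp(U)^{\blacktriangledown}=\{X^{\blacktriangledown}\mid X\subseteq U\}$, $\wp(U)^{\blacktriangle}=\{X^{\blacktriangle}\mid X\subseteq U\}$, complete lattices under $\subseteq$. $\mathcal S=\{x\in U\mid |R(x)|=1\}$. $\mathrm{RS}=\{(X^{\blacktriangledown},X^{\blacktriangle})\mid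 X\subseteq U\}$ ordered coordinatewise; $\mathrm{DM(RS)}$ is its Dedekind–MacNeille completion, identified with $\{(A,B)\in\wp(U)^{\blacktriangledown}\times\wp(U)^{\blacktriangle}\mid A^{\vartriangle\blacktriangle}\subseteq B,\ A\cap\mathcal S=B\cap\mathcal S\}$ ordered coordinatewise, with meets $\bigwedge_i(X_i,Y_i)=(\bigcap_iX_i,(\bigcap_iY_i)^{\triangledown\blacktriangle})$ and joins $\bigvee_i(X_i,Y_i)=((\bigcup_iX_i)^{\vartriangle\blacktriangledown},\bigcup_iY_i)$. An element $j$ of a complete lattice is completely join-irreducible if $j=\bigvee S$ implies $j\in S$. When $\mathrm{DM(RS)}$ is distributive ($R$ reflexive) it is a Kleene algebra with $\sim(A,B)=(B^c,A^c)$; for a completely join-irreducible $j$ of $\mathrm{DM(RS)}$, $g(j)=\bigwedge\{a\in\mathrm{DM(RS)}\mid a\not\le\sim j\}$. (Under the hypotheses, $(\emptyset,\{x\}^{\blacktriangle})$ and $(\emptyset,\{y\}^{\blacktriangle})$ are completely join-irreducible elements of $\mathrm{DM(RS)}$.) *)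

theory Defs
  imports Main
begin

text \<open>The universe U is the whole type 'a; R is a binary relation on it.\<close>

definition Rimg :: "('a \<times> 'a) set \<Rightarrow> 'a \<Rightarrow> 'a set" where
  "Rimg R x = {y. (x, y) \<in> R}"

definition Rinv :: "('a \<times> 'a) set \<Rightarrow> 'a \<Rightarrow> 'a set" where
  "Rinv R x = {y. (y, x) \<in> R}"

definition lowD :: "('a \<times> 'a) set \<Rightarrow> 'a set \<Rightarrow> 'a set" where
  "lowD R X = {x. Rimg R x \<subseteq> X}"

definition upD :: "('a \<times> 'a) set \<Rightarrow> 'a set \<Rightarrow> 'a set" where
  "upD R X = {x. Rimg R x \<inter> X \<noteq> {}}"

definition lowI :: "('a \<times> 'a) set \<Rightarrow> 'a set \<Rightarrow> 'a set" where
  "lowI R X = {x. Rinv R x \<subseteq> X}"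

definition upI :: "('a \<times> 'a) set \<Rightarrow> 'a set \<Rightarrow> 'a set" where
  "upI R X = {x. Rinv R x \<inter> X \<noteq> {}}"

definition Sset :: "('a \<times> 'a) set \<Rightarrow> 'a set" where
  "Sset R = {x. card (Rimg R x) = 1}"

definition DM :: "('a \<times> 'a) set \<Rightarrow> ('a set \<times> 'a set) set" where
  "DM R = {(A, B). A \<in> range (lowD R) \<and> B \<in> range (upD R)
                 \<and> upD R (upI R A) \<subseteq> B \<and> A \<inter> Sset R = B \<inter> Sset R}"

definition DM_le :: "('a set \<times> 'a set) \<Rightarrow> ('a set \<times> 'a set) \<Rightarrow> bool" where
  "DM_le p q \<longleftrightarrow> fst p \<subseteq> fst q \<and> snd p \<subseteq> snd q"

definition DM_Inf :: "('a \<times> 'a) set \<Rightarrow> ('a set \<times> 'a set) set \<Rightarrow> 'a set \<times> 'a set" where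
  "DM_Inf R P = (\<Inter> (fst ` P), upD R (lowI R (\<Inter> (snd ` P))))"

definition DM_Sup :: "('a \<times> 'a) set \<Rightarrow> ('a set \<times> 'a set) set \<Rightarrow> 'a set \<times> 'a set" where
  "DM_Sup R P = (lowD R (upI R (\<Union> (fst ` P))), \<Union> (snd ` P))"

definition DM_completely_distributive :: "('a \<times> 'a) set \<Rightarrow> bool" where
  "DM_completely_distributive R \<longleftrightarrow>
     (\<forall>\<A>. \<A> \<subseteq> Pow (DM R) \<longrightarrow>
        DM_Inf R (DM_Sup R ` \<A>) =
        DM_Sup R (DM_Inf R ` {f ` \<A> | f. \<forall>Y\<in>\<A>. f Y \<in> Y}))"

definition is_lub_in :: "('b \<Rightarrow> 'b \<Rightarrow> bool) \<Rightarrow> 'b set \<Rightarrow> 'b set \<Rightarrow> 'b \<Rightarrow> bool" where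
  "is_lub_in le L S j \<longleftrightarrow> j \<in> L \<and> (\<forall>s\<in>S. le s j) \<and> (\<forall>u\<in>L. (\<forall>s\<in>S. le s u) \<longrightarrow> le j u)"

definition cji_in :: "('b \<Rightarrow> 'b \<Rightarrow> bool) \<Rightarrow> 'b set \<Rightarrow> 'b \<Rightarrow> bool" where
  "cji_in le L j \<longleftrightarrow> j \<in> L \<and> (\<forall>S. S \<subseteq> L \<longrightarrow> is_lub_in le L S j \<longrightarrow> j \<in> S)"

definition DM_neg :: "'a set \<times> 'a set \<Rightarrow> 'a set \<times> 'a set" where
  "DM_neg p = (- snd p, - fst p)"

definition gmap :: "('a \<times> 'a) set \<Rightarrow> 'a set \<times> 'a set \<Rightarrow> 'a set \<times> 'a set" where
  "gmap R j = DM_Inf R {a \<in> DM R. \<not> DM_le a (DM_neg j)}"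

end

theory Submission
  imports Defs
begin

text \<open>Complete distributivity of DM(RS), applied to the binary meet of \<open>{x}\<^sup>\<blacktriangle>\<close> with a join
  \<open>\<Or>\<^sub>w\<^sub>\<in>\<^sub>W {w}\<^sup>\<blacktriangle>\<close>, writes \<open>{x}\<^sup>\<blacktriangle>\<close> as a union of elements of \<open>\<wp>(U)\<^sup>\<blacktriangle>\<close>; complete
  join-irreducibility then makes \<open>{x}\<^sup>\<blacktriangle>\<close> completely join-prime: \<open>{x}\<^sup>\<blacktriangle> \<subseteq> W\<^sup>\<blacktriangle>\<close> forces
  \<open>{x}\<^sup>\<blacktriangle> \<subseteq> {w}\<^sup>\<blacktriangle>\<close> for some \<open>w \<in> W\<close>. The second component of \<open>g(\<emptyset>, {y}\<^sup>\<blacktriangle>)\<close> is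
  \<open>C\<^sup>\<triangledown>\<^sup>\<blacktriangle>\<close>, where \<open>C\<close> is the intersection of all \<open>B\<close> with \<open>(A, B) \<in> DM(RS)\<close> and
  \<open>A \<inter> {y}\<^sup>\<blacktriangle> \<noteq> \<emptyset>\<close>. A common upper bound \<open>{u}\<^sup>\<blacktriangle>\<close> lies below every such \<open>B\<close>, which gives (ii).
  Conversely, testing \<open>{x}\<^sup>\<blacktriangle> \<le> g(\<emptyset>, {y}\<^sup>\<blacktriangle>)\<close> against the pairs \<open>(R(a)\<^sup>\<blacktriangledown>, R(a)\<^sup>\<blacktriangle>)\<close> for
  \<open>a \<in> {y}\<^sup>\<blacktriangle>\<close> and applying join-primeness twice produces the common upper bound.\<close>

lemma upD_singleton: "upD R {x} = {z. (z, x) \<in> R}"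
  by (auto simp: upD_def Rimg_def)

lemma upD_eq_UN_singleton: "upD R W = (\<Union>w\<in>W. upD R {w})"
  by (auto simp: upD_def)

lemma upD_mono: "X \<subseteq> Y \<Longrightarrow> upD R X \<subseteq> upD R Y"
  by (auto simp: upD_def)

lemma lowI_mono: "X \<subseteq> Y \<Longrightarrow> lowI R X \<subseteq> lowI R Y"
  by (auto simp: lowI_def)

lemma upD_lowI_subset: "refl R \<Longrightarrow> upD R (lowI R Y) \<subseteq> Y"
  by (auto simp: upD_def lowI_def Rimg_def Rinv_def refl_on_def)

lemma upD_subset_upD_lowI_upD: "upD R X \<subseteq> upD R (lowI R (upD R X))"
  by (auto simp: upD_def lowI_def Rimg_def Rinv_def)

lemma upD_lowI_upD: "refl R \<Longrightarrow> upD R (lowI R (upD R X)) = upD R X"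
  using upD_lowI_subset upD_subset_upD_lowI_upD by (metis subset_antisym)

lemma lowD_upD_in_DM: "(lowD R X, upD R X) \<in> DM R"
proof -
  have "upD R (upI R (lowD R X)) \<subseteq> upD R X"
    by (rule upD_mono) (auto simp: upI_def lowD_def Rinv_def Rimg_def)
  moreover have "z \<in> lowD R X \<longleftrightarrow> z \<in> upD R X" if "z \<in> Sset R" for z
  proof -
    from that have "card (Rimg R z) = 1" by (simp add: Sset_def)
    then obtain w where "Rimg R z = {w}" by (rule card_1_singletonE)
    then show ?thesis by (auto simp: lowD_def upD_def)
  qed
  ultimately show ?thesis unfolding DM_def by blast
qed

lemma cji_in_Union:
  assumes "cji_in (\<subseteq>) L j" and "S \<subseteq> L" and "\<Union> S = j"
  shows "j \<in> S"
proof -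
  have "is_lub_in (\<subseteq>) L S j"
    using assms unfolding is_lub_in_def cji_in_def by blast
  then show ?thesis using assms(1,2) unfolding cji_in_def by blast
qed

lemma DM_snd_inf_Sup_distrib:
  assumes cd: "DM_completely_distributive R" and "p \<in> DM R" and "Q \<subseteq> DM R"
  shows "upD R (lowI R (snd p \<inter> \<Union> (snd ` Q))) =
         (\<Union>q\<in>Q. upD R (lowI R (snd p \<inter> snd q)))"
proof -
  define \<A> where "\<A> = {{p}, Q}"
  have "\<A> \<subseteq> Pow (DM R)" using assms(2,3) by (auto simp: \<A>_def)
  with cd have distrib: "DM_Inf R (DM_Sup R ` \<A>) =
      DM_Sup R (DM_Inf R ` {f ` \<A> | f. \<forall>Y\<in>\<A>. f Y \<in> Y})"
    unfolding DM_completely_distributive_def by blast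
  \<comment> \<open>a choice function on \<open>{{p}, Q}\<close> is determined by the element it picks from \<open>Q\<close>\<close>
  have choices: "{f ` \<A> | f. \<forall>Y\<in>\<A>. f Y \<in> Y} = (\<lambda>q. {p, q}) ` Q"
  proof (intro equalityI subsetI)
    fix P assume "P \<in> {f ` \<A> | f. \<forall>Y\<in>\<A>. f Y \<in> Y}"
    then obtain f where "P = f ` \<A>" and "\<forall>Y\<in>\<A>. f Y \<in> Y" by blast
    then show "P \<in> (\<lambda>q. {p, q}) ` Q" by (auto simp: \<A>_def)
  next
    fix P assume "P \<in> (\<lambda>q. {p, q}) ` Q"
    then obtain q where q: "q \<in> Q" and P: "P = {p, q}" by blast
    define f where "f Y = (if Y = {p} then p else q)" for Y
    have "\<forall>Y\<in>\<A>. f Y \<in> Y" using q by (auto simp: \<A>_def f_def)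
    moreover have "P = f ` \<A>" using q by (auto simp: \<A>_def f_def P)
    ultimately show "P \<in> {f ` \<A> | f. \<forall>Y\<in>\<A>. f Y \<in> Y}" by blast
  qed
  have "snd (DM_Inf R (DM_Sup R ` \<A>)) = upD R (lowI R (snd p \<inter> \<Union> (snd ` Q)))"
    by (auto simp: \<A>_def DM_Inf_def DM_Sup_def)
  moreover have "snd (DM_Sup R (DM_Inf R ` ((\<lambda>q. {p, q}) ` Q))) =
      (\<Union>q\<in>Q. upD R (lowI R (snd p \<inter> snd q)))"
    by (auto simp: DM_Inf_def DM_Sup_def)
  ultimately show ?thesis using distrib choices by metis
qed

lemma cji_upD_singleton_join_prime:
  assumes refl: "refl R" and cd: "DM_completely_distributive R"
    and cji: "cji_in (\<subseteq>) (range (upD R)) (upD R {x})"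
    and sub: "upD R {x} \<subseteq> upD R W"
  shows "\<exists>w\<in>W. upD R {x} \<subseteq> upD R {w}"
proof -
  define q where "q z = (lowD R {z}, upD R {z})" for z
  define S where "S = (\<lambda>w. upD R (lowI R (upD R {x} \<inter> upD R {w}))) ` W"
  have "upD R {x} = upD R (lowI R (snd (q x) \<inter> \<Union> (snd ` q ` W)))"
    using sub upD_lowI_upD[OF refl, of "{x}"]
    by (simp add: q_def image_image upD_eq_UN_singleton[of R W, symmetric] Int_absorb2)
  also have "\<dots> = \<Union> S"
    using DM_snd_inf_Sup_distrib[OF cd, of "q x" "q ` W"] lowD_upD_in_DM
    by (auto simp: S_def q_def)
  finally have "upD R {x} \<in> S"
    by (intro cji_in_Union[OF cji]) (auto simp: S_def)
  then obtain w where "w \<in> W" and "upD R {x} = upD R (lowI R (upD R {x} \<inter> upD R {w}))"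
    by (auto simp: S_def)
  with upD_lowI_subset[OF refl] show ?thesis by blast
qed

lemma snd_gmap_empty:
  "snd (gmap R ({}, B)) = upD R (lowI R (\<Inter> (snd ` {a \<in> DM R. fst a \<inter> B \<noteq> {}})))"
proof -
  have "{a \<in> DM R. \<not> DM_le a (DM_neg ({}, B))} = {a \<in> DM R. fst a \<inter> B \<noteq> {}}"
    by (auto simp: DM_le_def DM_neg_def)
  then show ?thesis by (simp add: gmap_def DM_Inf_def)
qed

lemma upD_singleton_subset_snd_DM:
  assumes "(A, B) \<in> DM R" and "A \<inter> upD R {q} \<noteq> {}" and "upD R {q} \<subseteq> upD R {u}"
  shows "upD R {u} \<subseteq> B"
proof -
  from assms(2,3) obtain a where "a \<in> A" and "(a, u) \<in> R" by (auto simp: upD_singleton)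
  then have "upD R {u} \<subseteq> upD R (upI R A)"
    by (intro upD_mono) (auto simp: upI_def Rinv_def)
  also have "\<dots> \<subseteq> B" using assms(1) by (simp add: DM_def)
  finally show ?thesis .
qed

lemma DM_le_gmap_if_common_upper:
  assumes "upD R {p} \<subseteq> upD R {u}" and "upD R {q} \<subseteq> upD R {u}"
  shows "DM_le ({}, upD R {p}) (gmap R ({}, upD R {q}))"
proof -
  let ?C = "\<Inter> (snd ` {a \<in> DM R. fst a \<inter> upD R {q} \<noteq> {}})"
  have u_below: "upD R {u} \<subseteq> ?C"
  proof (rule INT_greatest)
    fix a assume "a \<in> {a \<in> DM R. fst a \<inter> upD R {q} \<noteq> {}}"
    then show "upD R {u} \<subseteq> snd a"
      using upD_singleton_subset_snd_DM[of "fst a" "snd a", OF _ _ assms(2)] by simp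
  qed
  have "upD R {p} \<subseteq> upD R {u}" by (fact assms(1))
  also have "\<dots> \<subseteq> upD R (lowI R (upD R {u}))" by (rule upD_subset_upD_lowI_upD)
  also have "\<dots> \<subseteq> upD R (lowI R ?C)" using u_below by (intro upD_mono lowI_mono)
  finally show ?thesis by (simp add: DM_le_def snd_gmap_empty)
qed

lemma common_upper_if_DM_le_gmap:
  assumes refl: "refl R" and cd: "DM_completely_distributive R"
    and cji_x: "cji_in (\<subseteq>) (range (upD R)) (upD R {x})"
    and cji_y: "cji_in (\<subseteq>) (range (upD R)) (upD R {y})"
    and le: "DM_le ({}, upD R {x}) (gmap R ({}, upD R {y}))"
  shows "\<exists>u. upD R {x} \<subseteq> upD R {u} \<and> upD R {y} \<subseteq> upD R {u}"
proof -
  let ?F = "{a \<in> DM R. fst a \<inter> upD R {y} \<noteq> {}}"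
  have "upD R {x} \<subseteq> upD R (lowI R (\<Inter> (snd ` ?F)))"
    using le by (simp add: DM_le_def snd_gmap_empty)
  with upD_lowI_subset[OF refl] have x_below: "upD R {x} \<subseteq> \<Inter> (snd ` ?F)"
    by (rule subset_trans[rotated])
  define V where "V = {t. upD R {x} \<subseteq> upD R {t}}"
  have "upD R {y} \<subseteq> upD R V"
  proof
    fix a assume a: "a \<in> upD R {y}"
    \<comment> \<open>the pair generated by \<open>R(a)\<close> meets \<open>{y}\<^sup>\<blacktriangle>\<close> in its first component, at \<open>a\<close>\<close>
    have "(lowD R (Rimg R a), upD R (Rimg R a)) \<in> ?F"
      using a lowD_upD_in_DM by (auto simp: lowD_def)
    then have "upD R {x} \<subseteq> upD R (Rimg R a)"
      using x_below by (metis (no_types, lifting) Inter_lower image_eqI snd_conv subset_trans)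
    then obtain t where "t \<in> Rimg R a" and "t \<in> V"
      unfolding V_def using cji_upD_singleton_join_prime[OF refl cd cji_x] by blast
    then show "a \<in> upD R V" by (auto simp: upD_def)
  qed
  then show ?thesis
    using cji_upD_singleton_join_prime[OF refl cd cji_y] unfolding V_def by blast
qed

theorem mainTheorem12:
  fixes R :: "('a \<times> 'a) set" and x y :: 'a
  assumes "refl R"
    and "DM_completely_distributive R"
    and "x \<notin> Sset R" and "y \<notin> Sset R"
    and "cji_in (\<subseteq>) (range (upD R)) (upD R {x})"
    and "cji_in (\<subseteq>) (range (upD R)) (upD R {y})"
  shows "(\<exists>u. upD R {x} \<subseteq> upD R {u} \<and> upD R {y} \<subseteq> upD R {u}) \<longleftrightarrow>
         (DM_le ({}, upD R {x}) (gmap R ({}, upD R {x})) \<and>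
          DM_le ({}, upD R {x}) (gmap R ({}, upD R {y})) \<and>
          DM_le ({}, upD R {y}) (gmap R ({}, upD R {x})) \<and>
          DM_le ({}, upD R {y}) (gmap R ({}, upD R {y})))"
proof
  assume "\<exists>u. upD R {x} \<subseteq> upD R {u} \<and> upD R {y} \<subseteq> upD R {u}"
  then obtain u where "upD R {x} \<subseteq> upD R {u}" and "upD R {y} \<subseteq> upD R {u}" by blast
  then show "DM_le ({}, upD R {x}) (gmap R ({}, upD R {x})) \<and>
      DM_le ({}, upD R {x}) (gmap R ({}, upD R {y})) \<and>
      DM_le ({}, upD R {y}) (gmap R ({}, upD R {x})) \<and>
      DM_le ({}, upD R {y}) (gmap R ({}, upD R {y}))"
    by (blast intro: DM_le_gmap_if_common_upper)
next
  assume "DM_le ({}, upD R {x}) (gmap R ({}, upD R {x})) \<and>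
      DM_le ({}, upD R {x}) (gmap R ({}, upD R {y})) \<and>
      DM_le ({}, upD R {y}) (gmap R ({}, upD R {x})) \<and>
      DM_le ({}, upD R {y}) (gmap R ({}, upD R {y}))"
  then show "\<exists>u. upD R {x} \<subseteq> upD R {u} \<and> upD R {y} \<subseteq> upD R {u}"
    using common_upper_if_DM_le_gmap[OF assms(1,2,5,6)] by blast
qed

end
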